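(* Let $M=(C,A,B)$ with $C\in\mathbb{R}^{p\times n}$, $A\in\mathbb{R}^{n\times n}$, $B\in\mathbb{R}^{n\times m}$ and $\rho(A)<1$, and fix an integer $d>0$. Then $$\|\mathcal{H}_{d,\infty,\infty}\|_2\le\|\mathcal{H}_{0,\infty,\infty}-\bar{\mathcal{H}}_{0,d,d}\|_2\le\sqrt2\,\|\mathcal{H}_{d,\infty,\infty}\|_2\le\sqrt2\,\|\mathcal{T}_{d,\infty}\|_2 .$$
   Context: $\mathcal{H}_{k,a,b}$ is the block Hankel matrix whose $(i,j)$ block ($1\le i\le a$, $1\le j\le b$, with $a=b=\infty$ allowed) is $CA^{k+i+j-2}B$. $\mathcal{T}_{k,\infty}$ is the infinite block lower-triangular Toeplitz matrix with zero diagonal blocks and $(i,j)$ block $CA^{k+i-j-1}B$ for $i>j$. For a finite matrix $P$, $\bar P=\begin{bmatrix}P&0\\0&0\end{bmatrix}$ is its zero padding to a doubly infinite matrix. Norms of infinite matrices are operator norms on $\ell^2$. *)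

theory Defs
  imports "Jordan_Normal_Form.Spectral_Radius" "HOL-Library.Extended_Real"
begin

text \<open>Infinite real matrices are represented by their scalar entries
  (row index, column index), both 0-based.\<close>

definition blockmat :: "nat \<Rightarrow> nat \<Rightarrow> (nat \<Rightarrow> nat \<Rightarrow> real mat) \<Rightarrow> nat \<Rightarrow> nat \<Rightarrow> real" where
  "blockmat p m F i j =
     (if p = 0 \<or> m = 0 then 0 else F (i div p) (j div m) $$ (i mod p, j mod m))"

definition markov :: "real mat \<Rightarrow> real mat \<Rightarrow> real mat \<Rightarrow> nat \<Rightarrow> real mat" where
  "markov C A B k = C * (A ^\<^sub>m k) * B"

text \<open>H_{k,inf,inf}: block (i,j) (1-based) is C A^(k+i+j-2) B.\<close>
definition hankel_inf :: "real mat \<Rightarrow> real mat \<Rightarrow> real mat \<Rightarrow> nat \<Rightarrow> nat \<Rightarrow> nat \<Rightarrow> real" where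
  "hankel_inf C A B k =
     blockmat (dim_row C) (dim_col B) (\<lambda>bi bj. markov C A B (k + bi + bj))"

text \<open>Zero padding of the finite Hankel matrix H_{k,a,b} to a doubly infinite matrix.\<close>
definition hankel_pad :: "real mat \<Rightarrow> real mat \<Rightarrow> real mat \<Rightarrow> nat \<Rightarrow> nat \<Rightarrow> nat \<Rightarrow> nat \<Rightarrow> nat \<Rightarrow> real" where
  "hankel_pad C A B k a b =
     blockmat (dim_row C) (dim_col B)
       (\<lambda>bi bj. if bi < a \<and> bj < b then markov C A B (k + bi + bj)
                else 0\<^sub>m (dim_row C) (dim_col B))"

definition toeplitz_inf :: "real mat \<Rightarrow> real mat \<Rightarrow> real mat \<Rightarrow> nat \<Rightarrow> nat \<Rightarrow> nat \<Rightarrow> real" where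
  "toeplitz_inf C A B k =
     blockmat (dim_row C) (dim_col B)
       (\<lambda>bi bj. if bj < bi then markov C A B (k + bi - bj - 1)
                else 0\<^sub>m (dim_row C) (dim_col B))"

text \<open>Operator norm on l^2 of an infinite matrix (value in ereal; infinite if
  unbounded): supremum over finite sections and unit vectors.\<close>
definition l2_opnorm :: "(nat \<Rightarrow> nat \<Rightarrow> real) \<Rightarrow> ereal" where
  "l2_opnorm M = (SUP (N, K, x) \<in> {(N, K, x :: nat \<Rightarrow> real). (\<Sum>j<K. (x j)\<^sup>2) \<le> 1}.
      ereal (sqrt (\<Sum>i<N. (\<Sum>j<K. M i j * x j)\<^sup>2)))"

end

(* Let D = H_0 - \bar H_{0,d,d}. Deleting the first d block rows of D leaves exactly H_d,
   so ||H_d|| <= ||D||. Those first d block rows are the first d block rows of H_d shifted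
   right by d block columns, so both horizontal slabs of D have norm at most ||H_d||, and
   stacking two slabs costs at most a factor sqrt 2. Finally H_d is a submatrix of T_d: for
   K > j its block (i, j) reappears in T_d as block (i + K, K - 1 - j).
   The norms are extended reals, so none of this needs rho(A) < 1 or d > 0. *)

theory Submission
  imports Defs
begin

lemma sum_lessThan_add:
  "(\<Sum>i<a + (b :: nat). f i) = (\<Sum>i<a. f i) + (\<Sum>i<b. f (i + a) :: 'a :: comm_monoid_add)"
  by (induction b) (simp_all add: ac_simps)

lemma l2_opnorm_section_le:
  assumes "(\<Sum>j<K. (x j)\<^sup>2) \<le> 1"
  shows "ereal (sqrt (\<Sum>i<N. (\<Sum>j<K. M i j * x j)\<^sup>2)) \<le> l2_opnorm M"
  unfolding l2_opnorm_def by (rule SUP_upper2[where i = "(N, K, x)"]) (use assms in auto)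

lemma l2_opnorm_leI:
  assumes "\<And>N K x. (\<Sum>j<K. (x j)\<^sup>2) \<le> 1 \<Longrightarrow>
             ereal (sqrt (\<Sum>i<N. (\<Sum>j<K. M i j * x j)\<^sup>2)) \<le> c"
  shows "l2_opnorm M \<le> c"
  unfolding l2_opnorm_def by (rule SUP_least) (use assms in auto)

lemma l2_opnorm_nonneg: "0 \<le> l2_opnorm M"
  using l2_opnorm_section_le[where N = 0 and K = 0 and M = M] by (simp add: zero_ereal_def)

lemma l2_opnorm_section_sq_le:
  assumes "l2_opnorm M \<le> ereal h" and "(\<Sum>j<K. (x j)\<^sup>2) \<le> 1"
  shows "(\<Sum>i<N. (\<Sum>j<K. M i j * x j)\<^sup>2) \<le> h\<^sup>2"
proof -
  have "sqrt (\<Sum>i<N. (\<Sum>j<K. M i j * x j)\<^sup>2) \<le> h"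
    using order_trans[OF l2_opnorm_section_le[OF assms(2)] assms(1)] by simp
  then show ?thesis
    using sqrt_le_D by blast
qed

lemma l2_opnorm_submatrix_le:
  assumes "\<And>N K. \<exists>r c. inj_on r {..<N} \<and> inj_on c {..<K} \<and>
             (\<forall>i<N. \<forall>j<K. M i j = M' (r i) (c j))"
  shows "l2_opnorm M \<le> l2_opnorm M'"
proof (rule l2_opnorm_leI)
  fix N K and x :: "nat \<Rightarrow> real"
  assume x: "(\<Sum>j<K. (x j)\<^sup>2) \<le> 1"
  obtain r c where r: "inj_on r {..<N}" and c: "inj_on c {..<K}"
    and entries: "\<forall>i<N. \<forall>j<K. M i j = M' (r i) (c j)"
    using assms by blast
  obtain N' K' where N': "r ` {..<N} \<subseteq> {..<N'}" and K': "c ` {..<K} \<subseteq> {..<K'}"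
    by (meson finite_imageI finite_lessThan finite_nat_set_iff_bounded lessThan_iff subsetI)
  define x' where "x' j' = (if j' \<in> c ` {..<K} then x (inv_into {..<K} c j') else 0)" for j'
  have x'_c: "x' (c j) = x j" if "j < K" for j
    using that c by (simp add: x'_def)
  have pull_back: "(\<Sum>j'<K'. g j' * x' j') = (\<Sum>j<K. g (c j) * x' (c j))" for g
  proof -
    have "(\<Sum>j'<K'. g j' * x' j') = (\<Sum>j'\<in>c ` {..<K}. g j' * x' j')"
      by (rule sum.mono_neutral_right[OF finite_lessThan K']) (simp add: x'_def)
    also have "\<dots> = (\<Sum>j<K. g (c j) * x' (c j))"
      by (rule sum.reindex[OF c, unfolded comp_def])
    finally show ?thesis .
  qed
  have "(\<Sum>j'<K'. (x' j')\<^sup>2) = (\<Sum>j<K. (x j)\<^sup>2)"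
    using pull_back[of x'] by (simp add: x'_c power2_eq_square)
  then have x': "(\<Sum>j'<K'. (x' j')\<^sup>2) \<le> 1"
    using x by simp
  define y where "y i' = (\<Sum>j'<K'. M' i' j' * x' j')" for i'
  have "(\<Sum>i<N. (\<Sum>j<K. M i j * x j)\<^sup>2) = (\<Sum>i<N. (y (r i))\<^sup>2)"
    by (rule sum.cong) (simp_all add: y_def pull_back x'_c entries)
  also have "\<dots> = (\<Sum>i'\<in>r ` {..<N}. (y i')\<^sup>2)"
    by (rule sum.reindex[OF r, unfolded comp_def, symmetric])
  also have "\<dots> \<le> (\<Sum>i'<N'. (y i')\<^sup>2)"
    by (rule sum_mono2[OF finite_lessThan N']) simp
  finally have "ereal (sqrt (\<Sum>i<N. (\<Sum>j<K. M i j * x j)\<^sup>2)) \<le> ereal (sqrt (\<Sum>i'<N'. (y i')\<^sup>2))"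
    by simp
  also have "\<dots> \<le> l2_opnorm M'"
    unfolding y_def by (rule l2_opnorm_section_le[OF x'])
  finally show "ereal (sqrt (\<Sum>i<N. (\<Sum>j<K. M i j * x j)\<^sup>2)) \<le> l2_opnorm M'" .
qed

lemma l2_opnorm_shift_rows_le: "l2_opnorm (\<lambda>i j. M (i + a) j) \<le> l2_opnorm M"
  by (rule l2_opnorm_submatrix_le, rule exI[of _ "\<lambda>i. i + a"], rule exI[of _ "\<lambda>j. j"]) auto

lemma l2_opnorm_truncate_rows_le: "l2_opnorm (\<lambda>i j. if i < a then M i j else 0) \<le> l2_opnorm M"
proof (rule l2_opnorm_leI)
  fix N K and x :: "nat \<Rightarrow> real"
  assume x: "(\<Sum>j<K. (x j)\<^sup>2) \<le> 1"
  have "(\<Sum>i<N. (\<Sum>j<K. (if i < a then M i j else 0) * x j)\<^sup>2)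
          = (\<Sum>i<min N a. (\<Sum>j<K. M i j * x j)\<^sup>2)"
    by (rule sum.mono_neutral_cong_right) auto
  then show "ereal (sqrt (\<Sum>i<N. (\<Sum>j<K. (if i < a then M i j else 0) * x j)\<^sup>2)) \<le> l2_opnorm M"
    using l2_opnorm_section_le[OF x, where N = "min N a" and M = M] by simp
qed

lemma l2_opnorm_shift_cols_le: "l2_opnorm (\<lambda>i j. if j < b then 0 else M i (j - b)) \<le> l2_opnorm M"
proof (rule l2_opnorm_leI)
  fix N K and x :: "nat \<Rightarrow> real"
  assume x: "(\<Sum>j<K. (x j)\<^sup>2) \<le> 1"
  define x0 where "x0 j = (if j < K then x j else 0)" for j
  define y where "y j = x0 (j + b)" for j
  have rows: "(\<Sum>j<K. (if j < b then 0 else M i (j - b)) * x j) = (\<Sum>j<K. M i j * y j)" for i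
  proof -
    have "(\<Sum>j<K. (if j < b then 0 else M i (j - b)) * x j)
            = (\<Sum>j<b + K. (if j < b then 0 else M i (j - b)) * x0 j)"
      by (rule sum.mono_neutral_cong_left) (auto simp: x0_def)
    also have "\<dots> = (\<Sum>j<K. M i j * y j)"
      by (simp add: sum_lessThan_add y_def)
    finally show ?thesis .
  qed
  have "(\<Sum>j<K. (y j)\<^sup>2) \<le> (\<Sum>j<b. (x0 j)\<^sup>2) + (\<Sum>j<K. (y j)\<^sup>2)"
    by (simp add: sum_nonneg)
  also have "\<dots> = (\<Sum>j<b + K. (x0 j)\<^sup>2)"
    by (simp add: sum_lessThan_add y_def)
  also have "\<dots> = (\<Sum>j<K. (x j)\<^sup>2)"
    by (rule sum.mono_neutral_cong_right) (auto simp: x0_def)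
  finally have "(\<Sum>j<K. (y j)\<^sup>2) \<le> 1"
    using x by simp
  then show "ereal (sqrt (\<Sum>i<N. (\<Sum>j<K. (if j < b then 0 else M i (j - b)) * x j)\<^sup>2)) \<le> l2_opnorm M"
    unfolding rows by (rule l2_opnorm_section_le)
qed

lemma l2_opnorm_split_rows_le:
  assumes top: "l2_opnorm (\<lambda>i j. if i < a then M i j else 0) \<le> c"
    and bottom: "l2_opnorm (\<lambda>i j. M (i + a) j) \<le> c"
  shows "l2_opnorm M \<le> ereal (sqrt 2) * c"
proof (cases c)
  case PInf
  then show ?thesis by simp
next
  case MInf
  then show ?thesis
    using bottom l2_opnorm_nonneg[of "\<lambda>i j. M (i + a) j"] by simp
next
  case (real h)
  have "0 \<le> h"
    using order_trans[OF l2_opnorm_nonneg bottom] real by simp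
  show ?thesis
    unfolding real times_ereal.simps
  proof (rule l2_opnorm_leI)
    fix N K and x :: "nat \<Rightarrow> real"
    assume x: "(\<Sum>j<K. (x j)\<^sup>2) \<le> 1"
    define f where "f i = (\<Sum>j<K. M i j * x j)" for i
    have "(\<Sum>i<a. (f i)\<^sup>2) \<le> h\<^sup>2"
      using l2_opnorm_section_sq_le[OF top[unfolded real] x, of a] by (simp add: f_def)
    moreover have "(\<Sum>i<N. (f (i + a))\<^sup>2) \<le> h\<^sup>2"
      using l2_opnorm_section_sq_le[OF bottom[unfolded real] x, of N] by (simp add: f_def)
    moreover have "(\<Sum>i<N. (f i)\<^sup>2) \<le> (\<Sum>i<a + N. (f i)\<^sup>2)"
      by (rule sum_mono2) auto
    ultimately have "(\<Sum>i<N. (f i)\<^sup>2) \<le> (sqrt 2 * h)\<^sup>2"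
      by (simp add: sum_lessThan_add power_mult_distrib)
    then show "ereal (sqrt (\<Sum>i<N. (\<Sum>j<K. M i j * x j)\<^sup>2)) \<le> ereal (sqrt 2 * h)"
      using \<open>0 \<le> h\<close> by (simp add: f_def real_le_lsqrt)
  qed
qed

lemma inj_on_block_reindex:
  fixes p :: nat
  assumes "inj_on R ((\<lambda>i. i div p) ` S)"
  shows "inj_on (\<lambda>i. R (i div p) * p + i mod p) S"
proof (cases "p = 0")
  case True
  then show ?thesis by (simp add: inj_on_def)
next
  case False
  show ?thesis
  proof (rule inj_onI)
    fix i i'
    assume "i \<in> S" "i' \<in> S" and eq: "R (i div p) * p + i mod p = R (i' div p) * p + i' mod p"
    have "R (i div p) = R (i' div p)"
      using arg_cong[OF eq, of "\<lambda>t. t div p"] False by simp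
    then have "i div p = i' div p"
      using assms \<open>i \<in> S\<close> \<open>i' \<in> S\<close> by (auto dest: inj_onD)
    moreover have "i mod p = i' mod p"
      using arg_cong[OF eq, of "\<lambda>t. t mod p"] by simp
    ultimately show "i = i'"
      by (metis div_mult_mod_eq)
  qed
qed

lemma blockmat_block_reindex:
  "blockmat p m G (R (i div p) * p + i mod p) (Cb (j div m) * m + j mod m)
     = blockmat p m (\<lambda>bi bj. G (R bi) (Cb bj)) i j"
  by (simp add: blockmat_def)

lemma l2_opnorm_blockmat_submatrix_le:
  assumes "\<And>N K. \<exists>R Cb. inj_on R {..<N} \<and> inj_on Cb {..<K} \<and>
             (\<forall>bi<N. \<forall>bj<K. F bi bj = G (R bi) (Cb bj))"
  shows "l2_opnorm (blockmat p m F) \<le> l2_opnorm (blockmat p m G)"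
proof (rule l2_opnorm_submatrix_le)
  fix N K
  obtain R Cb where R: "inj_on R {..<N}" and Cb: "inj_on Cb {..<K}"
    and blocks: "\<forall>bi<N. \<forall>bj<K. F bi bj = G (R bi) (Cb bj)"
    using assms by blast
  have div_lessThan: "(\<lambda>i. i div q) ` {..<n} \<subseteq> {..<n}" for q n :: nat
    by (auto intro: le_less_trans[OF div_le_dividend])
  show "\<exists>r c. inj_on r {..<N} \<and> inj_on c {..<K} \<and>
          (\<forall>i<N. \<forall>j<K. blockmat p m F i j = blockmat p m G (r i) (c j))"
  proof (intro exI conjI allI impI)
    show "inj_on (\<lambda>i. R (i div p) * p + i mod p) {..<N}"
      by (rule inj_on_block_reindex, rule inj_on_subset[OF R div_lessThan])
    show "inj_on (\<lambda>j. Cb (j div m) * m + j mod m) {..<K}"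
      by (rule inj_on_block_reindex, rule inj_on_subset[OF Cb div_lessThan])
    fix i j
    assume "i < N" "j < K"
    then have "i div p < N" "j div m < K"
      using div_le_dividend le_less_trans by blast+
    then show "blockmat p m F i j = blockmat p m G (R (i div p) * p + i mod p) (Cb (j div m) * m + j mod m)"
      using blocks by (simp add: blockmat_block_reindex blockmat_def)
  qed
qed

lemma hankel_inf_shift_rows:
  "hankel_inf C A B k (i + a * dim_row C) j = hankel_inf C A B (k + a) i j"
  by (simp add: hankel_inf_def blockmat_def ac_simps)

lemma hankel_inf_shift_cols:
  "hankel_inf C A B k i (j + b * dim_col B) = hankel_inf C A B (k + b) i j"
  by (simp add: hankel_inf_def blockmat_def ac_simps)

lemma hankel_pad_eq:
  "hankel_pad C A B k a b i j =
     (if i div dim_row C < a \<and> j div dim_col B < b then hankel_inf C A B k i j else 0)"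
  by (simp add: hankel_pad_def hankel_inf_def blockmat_def)

lemma l2_opnorm_hankel_le_toeplitz:
  "l2_opnorm (hankel_inf C A B k) \<le> l2_opnorm (toeplitz_inf C A B k)"
  unfolding hankel_inf_def toeplitz_inf_def
proof (rule l2_opnorm_blockmat_submatrix_le)
  fix N K :: nat
  show "\<exists>R Cb. inj_on R {..<N} \<and> inj_on Cb {..<K} \<and>
          (\<forall>bi<N. \<forall>bj<K. markov C A B (k + bi + bj) =
             (if Cb bj < R bi then markov C A B (k + R bi - Cb bj - 1) else 0\<^sub>m (dim_row C) (dim_col B)))"
    by (rule exI[of _ "\<lambda>bi. bi + K"], rule exI[of _ "\<lambda>bj. K - 1 - bj"]) (auto simp: inj_on_def add.assoc)
qed

lemma hankel_inf_minus_pad_bottom_rows: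
  "hankel_inf C A B 0 (i + d * dim_row C) j - hankel_pad C A B 0 d d (i + d * dim_row C) j
     = hankel_inf C A B d i j"
proof (cases "dim_row C = 0")
  case True
  then show ?thesis by (simp add: hankel_pad_def hankel_inf_def blockmat_def)
next
  case False
  then show ?thesis by (simp add: hankel_pad_eq hankel_inf_shift_rows)
qed

lemma hankel_inf_minus_pad_top_rows:
  assumes "i < d * dim_row C"
  shows "hankel_inf C A B 0 i j - hankel_pad C A B 0 d d i j
           = (if j < d * dim_col B then 0 else hankel_inf C A B d i (j - d * dim_col B))"
proof (cases "j < d * dim_col B")
  case True
  then have "i div dim_row C < d" "j div dim_col B < d"
    using assms by (simp_all add: less_mult_imp_div_less)
  then show ?thesis
    using True by (simp add: hankel_pad_eq)
next
  case False
  show ?thesis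
  proof (cases "dim_col B = 0")
    case True
    then show ?thesis by (simp add: hankel_pad_def hankel_inf_def blockmat_def)
  next
    case False
    then have "\<not> j div dim_col B < d"
      using \<open>\<not> j < d * dim_col B\<close> by (simp add: div_less_iff_less_mult)
    moreover have "hankel_inf C A B 0 i j = hankel_inf C A B d i (j - d * dim_col B)"
      using hankel_inf_shift_cols[of C A B 0 i "j - d * dim_col B" d] \<open>\<not> j < d * dim_col B\<close>
      by simp
    ultimately show ?thesis
      using \<open>\<not> j < d * dim_col B\<close> by (simp add: hankel_pad_eq)
  qed
qed

theorem proposition13:
  fixes C A B :: "real mat" and p n m d :: nat
  assumes "C \<in> carrier_mat p n" and "A \<in> carrier_mat n n" and "B \<in> carrier_mat n m"
    and "spectral_radius (map_mat complex_of_real A) < 1"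
    and "d > 0"
  shows "l2_opnorm (hankel_inf C A B d)
           \<le> l2_opnorm (\<lambda>i j. hankel_inf C A B 0 i j - hankel_pad C A B 0 d d i j)
       \<and> l2_opnorm (\<lambda>i j. hankel_inf C A B 0 i j - hankel_pad C A B 0 d d i j)
           \<le> ereal (sqrt 2) * l2_opnorm (hankel_inf C A B d)
       \<and> ereal (sqrt 2) * l2_opnorm (hankel_inf C A B d)
           \<le> ereal (sqrt 2) * l2_opnorm (toeplitz_inf C A B d)"
proof -
  let ?H = "hankel_inf C A B d"
  let ?D = "\<lambda>i j. hankel_inf C A B 0 i j - hankel_pad C A B 0 d d i j"
  have bottom: "(\<lambda>i j. ?D (i + d * dim_row C) j) = ?H"
    by (simp add: hankel_inf_minus_pad_bottom_rows)
  have top: "(\<lambda>i j. if i < d * dim_row C then ?D i j else 0)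
      = (\<lambda>i j. if i < d * dim_row C then
                  if j < d * dim_col B then 0 else ?H i (j - d * dim_col B) else 0)"
    by (simp add: hankel_inf_minus_pad_top_rows fun_eq_iff)
  have "l2_opnorm ?H \<le> l2_opnorm ?D"
    using l2_opnorm_shift_rows_le[of ?D "d * dim_row C"] unfolding bottom .
  moreover have "l2_opnorm ?D \<le> ereal (sqrt 2) * l2_opnorm ?H"
  proof (rule l2_opnorm_split_rows_le)
    show "l2_opnorm (\<lambda>i j. if i < d * dim_row C then ?D i j else 0) \<le> l2_opnorm ?H"
      unfolding top by (rule order_trans[OF l2_opnorm_truncate_rows_le l2_opnorm_shift_cols_le])
    show "l2_opnorm (\<lambda>i j. ?D (i + d * dim_row C) j) \<le> l2_opnorm ?H"
      unfolding bottom ..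
  qed
  moreover have "ereal (sqrt 2) * l2_opnorm ?H \<le> ereal (sqrt 2) * l2_opnorm (toeplitz_inf C A B d)"
    by (rule ereal_mult_left_mono[OF l2_opnorm_hankel_le_toeplitz]) simp
  ultimately show ?thesis by blast
qed

end
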